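(* Consider a particular run of Algorithm 1 (parameter $\alpha \in (0,1/2)$). Let $\zeta$ be a constant such that $-\frac{\zeta}{w_i^t} \le \partial_i L^t(\mathbf{w}^t) \le \zeta$ for all $i \in [m]$, $t \in [T]$. Then for every $i, t$, \[(w_i^t)^{\alpha - 1} - \left(\frac{1}{w_i^t} + 1\right)\eta_t \zeta \le (w_i^{t+1})^{\alpha-1} \le (w_i^t)^{\alpha-1} + \left(\frac{1}{\min_k w_k^t} + 1\right)\eta_t \zeta.\] Furthermore, if $\eta_t \zeta \le (1-\alpha)^2 (w_i^t)^\alpha$ for all $i$, then for every $i$, \[(w_i^{t+1})^{\alpha-1} \le (w_i^t)^{\alpha-1} + (m+1)\eta_t \zeta.\]
   Context: Setting. There are $m$ experts and $n$ outcomes; $\Delta^k$ denotes the probability simplex in $\mathbb{R}^k$. For reports $\mathbf{p}^1, \dots, \mathbf{p}^m \in \Delta^n$ and $\mathbf{w} \in \Delta^m$, the logarithmic pool is $p^*_j(\mathbf{w}) = \frac{\prod_{k} (p^k_j)^{w_k}}{\sum_{\ell=1}^n \prod_{k} (p^k_\ell)^{w_k}}$. At each time $t\in[T]$, reports $\mathbf{p}^{t,1},\dots,\mathbf{p}^{t,m}$ and an outcome $j_t$ are revealed, with loss $L^t(\mathbf{w}) := -\ln p^*_{j_t}(\mathbf{w})$ and, by convention, $\partial_i L^t(\mathbf{w}) := \sum_{\ell=1}^n p^*_\ell(\mathbf{w}) \ln p^{t,i}_\ell - \ln p^{t,i}_{j_t}$. Algorithm 1 (parameter $\alpha \in (0,1/2)$):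 $R(\mathbf{w}) = -\frac{1}{\alpha}\sum_i w_i^\alpha$, $\eta = \frac{1}{\sqrt{T}\ln T}\cdot\frac{1}{12 m^{(1+\alpha)/2} n}$, $\mathbf{w}^1 = (1/m,\dots,1/m)$, $\eta_0 = +\infty$. For $t = 1,\dots,T$: if $\eta \le \min_i (w_i^t)^\alpha$ set $\eta_t = \min(\eta_{t-1}, \eta)$, else $\eta_t = \min(\eta_{t-1}, \min_i w_i^t)$; then $\mathbf{w}^{t+1} \in \Delta^m$ is defined by $-(w_i^{t+1})^{\alpha-1} = -(w_i^t)^{\alpha-1} - \eta_t \partial_i L^t(\mathbf{w}^t) + c$ for all $i$, with $c \in \mathbb{R}$ the unique constant making $\sum_i w_i^{t+1} = 1$. *)

theory Defs
  imports Complex_Main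
begin

text \<open>Experts are indexed by 0..<m, outcomes by 0..<n, time steps by 1..T.
  Reports: p t k l is the probability expert k assigns to outcome l at time t;
  jt t is the realized outcome at time t; weights w t i.\<close>

definition in_simplex :: "nat \<Rightarrow> (nat \<Rightarrow> real) \<Rightarrow> bool" where
  "in_simplex k x \<longleftrightarrow> (\<forall>i<k. 0 \<le> x i) \<and> (\<Sum>i<k. x i) = 1"

definition log_pool :: "nat \<Rightarrow> nat \<Rightarrow> (nat \<Rightarrow> nat \<Rightarrow> real) \<Rightarrow> (nat \<Rightarrow> real) \<Rightarrow> nat \<Rightarrow> real" where
  "log_pool m n q w j =
     (\<Prod>k<m. q k j powr w k) / (\<Sum>l<n. \<Prod>k<m. q k l powr w k)"

definition partial_loss ::
  "nat \<Rightarrow> nat \<Rightarrow> (nat \<Rightarrow> nat \<Rightarrow> real) \<Rightarrow> nat \<Rightarrow> (nat \<Rightarrow> real) \<Rightarrow> nat \<Rightarrow> real" where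
  "partial_loss m n q j w i =
     (\<Sum>l<n. log_pool m n q w l * ln (q i l)) - ln (q i j)"

definition alg1_eta :: "nat \<Rightarrow> nat \<Rightarrow> nat \<Rightarrow> real \<Rightarrow> real" where
  "alg1_eta m n T \<alpha> =
     1 / (sqrt (real T) * ln (real T)) * (1 / (12 * real m powr ((1 + \<alpha>) / 2) * real n))"

definition min_weight :: "nat \<Rightarrow> (nat \<Rightarrow> real) \<Rightarrow> real" where
  "min_weight m x = Min (x ` {..<m})"

text \<open>A run of Algorithm 1: weights w t (t = 1..T+1) and learning rates eta_t (t = 1..T),
  with eta_0 = +infinity (so at t = 1 the min with eta_0 is omitted).
  The weights must lie in the (relative interior of the) simplex, since the update
  involves negative powers of the weights.\<close>
definition alg1_run ::
  "nat \<Rightarrow> nat \<Rightarrow> nat \<Rightarrow> real \<Rightarrow> (nat \<Rightarrow> nat \<Rightarrow> nat \<Rightarrow> real) \<Rightarrow> (nat \<Rightarrow> nat)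
     \<Rightarrow> (nat \<Rightarrow> nat \<Rightarrow> real) \<Rightarrow> (nat \<Rightarrow> real) \<Rightarrow> bool" where
  "alg1_run m n T \<alpha> p jt w \<eta> \<longleftrightarrow>
     (\<forall>i<m. w 1 i = 1 / real m) \<and>
     (\<forall>t\<in>{1..T}.
        \<eta> t = (let cand = (if alg1_eta m n T \<alpha> \<le> min_weight m (\<lambda>i. w t i powr \<alpha>)
                           then alg1_eta m n T \<alpha> else min_weight m (w t))
               in if t = 1 then cand else min (\<eta> (t - 1)) cand) \<and>
        in_simplex m (w (t + 1)) \<and> (\<forall>i<m. 0 < w (t + 1) i) \<and>
        (\<exists>c::real. \<forall>i<m.
           - (w (t + 1) i powr (\<alpha> - 1)) =
             - (w t i powr (\<alpha> - 1)) - \<eta> t * partial_loss m n (p t) (jt t) (w t) i + c))"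

end

theory Submission
  imports Defs "HOL-Analysis.Analysis"
begin

text \<open>
  The update shifts every \<open>x\<^sub>i powr (\<alpha> - 1)\<close> by \<open>\<eta>\<^sub>t \<partial>\<^sub>iL - c\<close>. Old and new weights both sum to one, so
  some coordinate grows and some shrinks; hence the normalizer \<open>c\<close> lies between the smallest and the
  largest shift, and the bounds on \<open>\<partial>\<^sub>iL\<close> give \<open>-\<delta> / min\<^sub>k x\<^sub>k \<le> c \<le> \<delta>\<close> with \<open>\<delta> = \<eta>\<^sub>t \<zeta>\<close>, which is the
  first claim. For the second it suffices that \<open>c \<ge> -m \<delta>\<close>. Otherwise every new weight would lie below
  \<open>F(x\<^sub>i)\<close>, where \<open>F(x) = (x powr (\<alpha> - 1) - \<delta> / x + m \<delta>) powr (1 / (\<alpha> - 1))\<close>. When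
  \<open>\<delta> \<le> (1 - \<alpha>)\<^sup>2 x powr \<alpha>\<close> the function \<open>F\<close> is concave, and \<open>F(1/m) = 1/m\<close>, so by Jensen's inequality
  the \<open>F(x\<^sub>i)\<close> sum to at most \<open>m F(1/m) = 1\<close>, contradicting that the new weights sum to one.
\<close>

lemma min_weight_le:
  assumes "i < m"
  shows "min_weight m x \<le> x i"
  using assms unfolding min_weight_def by simp

lemma min_weight_attained:
  assumes "0 < m"
  obtains k where "k < m" "min_weight m x = x k"
proof -
  have "min_weight m x \<in> x ` {..<m}"
    unfolding min_weight_def using assms by (intro Min_in) auto
  then show ?thesis using that by auto
qed

lemma min_weight_pos:
  assumes "0 < m" "\<forall>i<m. 0 < x i"
  shows "0 < min_weight m x"
  using assms by (metis min_weight_attained)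

text \<open>The weight that the update produces from \<open>x\<close> for the extreme step \<open>-\<delta> / x\<close> and normalizer \<open>-D\<close>.\<close>

definition perturbed_weight :: "real \<Rightarrow> real \<Rightarrow> real \<Rightarrow> real \<Rightarrow> real" where
  "perturbed_weight \<alpha> \<delta> D x = (x powr (\<alpha> - 1) - \<delta> / x + D) powr (1 / (\<alpha> - 1))"

lemma perturbed_weight_base_pos:
  fixes \<alpha> \<delta> D x :: real
  assumes "0 < \<alpha>" "\<alpha> < 1" "0 \<le> D" "0 < x" "\<delta> \<le> (1 - \<alpha>)^2 * x powr \<alpha>"
  shows "0 < x powr (\<alpha> - 1) - \<delta> / x + D"
proof -
  have "(1 - \<alpha>)^2 < 1"
    using assms(1,2) by (simp add: abs_square_less_1)
  then have "\<delta> < x powr \<alpha>"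
    using assms(4,5) by (smt (verit) mult_less_cancel_right2 powr_gt_zero)
  then have "\<delta> / x < x powr (\<alpha> - 1)"
    using assms(4) by (simp add: powr_diff divide_strict_right_mono)
  then show ?thesis
    using assms(3) by linarith
qed

lemma concavity_numerator_nonneg:
  fixes \<alpha> \<delta> U N :: real
  assumes "0 < \<alpha>" "\<alpha> < 1" "0 \<le> \<delta>" "0 \<le> N" "\<delta> \<le> (1 - \<alpha>)^2 * U"
  shows "0 \<le> (2 - \<alpha>) / (\<alpha> - 1) * ((\<alpha> - 1) * U + \<delta>)^2
              + (U - \<delta> + N) * ((\<alpha> - 1) * (\<alpha> - 2) * U - 2 * \<delta>)"
    (is "0 \<le> ?E")
proof -
  have U: "0 \<le> U"
  proof -
    have "0 \<le> (1 - \<alpha>)^2 * U" using assms(3,5) by linarith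
    then show ?thesis using assms(2) by (simp add: zero_le_mult_iff)
  qed
  have "(1 - \<alpha>)^2 * U \<le> (1 - \<alpha>) * (2 - \<alpha>) / 2 * U"
    using assms(1,2) U by (intro mult_right_mono) (simp_all add: power2_eq_square field_simps)
  then have "0 \<le> (1 - \<alpha>) * N * ((1 - \<alpha>) * (2 - \<alpha>) * U - 2 * \<delta>)"
    using assms(2,4,5) by simp
  moreover have "0 \<le> \<alpha> * \<delta> * ((1 - \<alpha>)^2 * U - \<delta>)"
    using assms(1,3,5) by simp
  moreover have "(1 - \<alpha>) * ?E = \<alpha> * \<delta> * ((1 - \<alpha>)^2 * U - \<delta>)
                        + (1 - \<alpha>) * N * ((1 - \<alpha>) * (2 - \<alpha>) * U - 2 * \<delta>)"
    using assms(2) by (simp add: field_simps power2_eq_square)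
  ultimately have "0 \<le> (1 - \<alpha>) * ?E"
    by linarith
  then show ?thesis
    using assms(2) by (simp add: zero_le_mult_iff)
qed

lemma concave_on_powr_neg:
  fixes y y' y'' :: "real \<Rightarrow> real" and q :: real
  assumes "convex C" "q < 0"
    and dy: "\<And>x. x \<in> C \<Longrightarrow> (y has_real_derivative y' x) (at x)"
    and dy': "\<And>x. x \<in> C \<Longrightarrow> (y' has_real_derivative y'' x) (at x)"
    and pos: "\<And>x. x \<in> C \<Longrightarrow> 0 < y x"
    and curv: "\<And>x. x \<in> C \<Longrightarrow> 0 \<le> (q - 1) * (y' x)^2 + y x * y'' x"
  shows "concave_on C (\<lambda>x. y x powr q)"
proof (rule f''_le0_imp_concave[OF \<open>convex C\<close>])
  fix x assume x: "x \<in> C"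
  show "((\<lambda>x. y x powr q) has_real_derivative q * y x powr (q - 1) * y' x) (at x)"
    using DERIV_fun_powr[OF dy[OF x] pos[OF x]] by simp
  show "((\<lambda>x. q * y x powr (q - 1) * y' x) has_real_derivative
      q * ((q - 1) * y x powr (q - 2) * (y' x)^2 + y x powr (q - 1) * y'' x)) (at x)"
    using DERIV_mult[OF DERIV_cmult[OF DERIV_fun_powr[OF dy[OF x] pos[OF x], of "q - 1"]] dy'[OF x], of q]
    by (simp add: power2_eq_square algebra_simps)
  have "y x powr (q - 1) = y x powr (q - 2) * y x"
    using powr_add[of "y x" "q - 2" 1] pos[OF x] by simp
  then have "q * ((q - 1) * y x powr (q - 2) * (y' x)^2 + y x powr (q - 1) * y'' x)
      = q * (y x powr (q - 2) * ((q - 1) * (y' x)^2 + y x * y'' x))"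
    by (simp add: algebra_simps)
  also have "\<dots> \<le> 0"
    using \<open>q < 0\<close> curv[OF x] by (simp add: mult_nonpos_nonneg)
  finally show "q * ((q - 1) * y x powr (q - 2) * (y' x)^2 + y x powr (q - 1) * y'' x) \<le> 0" .
qed

lemma concave_on_perturbed_weight:
  fixes \<alpha> \<delta> D a :: real
  assumes \<alpha>: "0 < \<alpha>" "\<alpha> < 1" and "0 \<le> \<delta>" "0 \<le> D" "0 < a"
    and \<delta>a: "\<delta> \<le> (1 - \<alpha>)^2 * a powr \<alpha>"
  shows "concave_on {a..} (perturbed_weight \<alpha> \<delta> D)"
proof -
  define y where "y x = x powr (\<alpha> - 1) - \<delta> / x + D" for x
  define y' where "y' x = (\<alpha> - 1) * x powr (\<alpha> - 2) + \<delta> / x^2" for x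
  define y'' where "y'' x = (\<alpha> - 1) * (\<alpha> - 2) * x powr (\<alpha> - 3) - 2 * \<delta> / x^3" for x
  have x_pos: "0 < x" and \<delta>x: "\<delta> \<le> (1 - \<alpha>)^2 * x powr \<alpha>" if "x \<in> {a..}" for x
  proof -
    show "0 < x" using that \<open>0 < a\<close> by simp
    have "a powr \<alpha> \<le> x powr \<alpha>"
      using that \<open>0 < a\<close> \<alpha> by (intro powr_mono2) auto
    then show "\<delta> \<le> (1 - \<alpha>)^2 * x powr \<alpha>"
      using \<delta>a by (meson mult_left_mono order_trans zero_le_power2)
  qed
  have "concave_on {a..} (\<lambda>x. y x powr (1 / (\<alpha> - 1)))"
  proof (rule concave_on_powr_neg)
    fix x assume x: "x \<in> {a..}"
    have "0 < x" using x_pos[OF x] .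
    have powr1: "((\<lambda>x. x powr (\<alpha> - 1)) has_real_derivative (\<alpha> - 1) * x powr (\<alpha> - 2)) (at x)"
      using has_real_derivative_powr[OF \<open>0 < x\<close>, of "\<alpha> - 1"] by simp
    have quotient1: "((\<lambda>x. \<delta> / x) has_real_derivative - \<delta> / x^2) (at x)"
      using \<open>0 < x\<close> by (auto intro!: derivative_eq_intros simp: power2_eq_square)
    show "(y has_real_derivative y' x) (at x)"
      unfolding y_def[abs_def] y'_def using DERIV_add[OF DERIV_diff[OF powr1 quotient1] DERIV_const[of D]]
      by simp
    have powr2: "((\<lambda>x. x powr (\<alpha> - 2)) has_real_derivative (\<alpha> - 2) * x powr (\<alpha> - 3)) (at x)"
      using has_real_derivative_powr[OF \<open>0 < x\<close>, of "\<alpha> - 2"] by simp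
    have quotient2: "((\<lambda>x. \<delta> / x^2) has_real_derivative - 2 * \<delta> / x^3) (at x)"
      using \<open>0 < x\<close> by (auto intro!: derivative_eq_intros simp: power2_eq_square power3_eq_cube field_simps)
    show "(y' has_real_derivative y'' x) (at x)"
      unfolding y'_def[abs_def] y''_def using DERIV_add[OF DERIV_cmult[OF powr2, of "\<alpha> - 1"] quotient2]
      by (simp add: algebra_simps)
    show "0 < y x"
      unfolding y_def using perturbed_weight_base_pos[OF \<alpha> \<open>0 \<le> D\<close> \<open>0 < x\<close> \<delta>x[OF x]] .
    have "x^2 * y' x = (\<alpha> - 1) * x powr \<alpha> + \<delta>"
      "x * y x = x powr \<alpha> - \<delta> + D * x"
      "x^3 * y'' x = (\<alpha> - 1) * (\<alpha> - 2) * x powr \<alpha> - 2 * \<delta>"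
      using \<open>0 < x\<close> unfolding y_def y'_def y''_def
      by (simp_all add: powr_diff power2_eq_square power3_eq_cube field_simps)
    moreover have "1 / (\<alpha> - 1) - 1 = (2 - \<alpha>) / (\<alpha> - 1)"
      using \<alpha> by (simp add: field_simps)
    ultimately have "0 \<le> (1 / (\<alpha> - 1) - 1) * (x^2 * y' x)^2 + (x * y x) * (x^3 * y'' x)"
      using concavity_numerator_nonneg[OF \<alpha> \<open>0 \<le> \<delta>\<close> _ \<delta>x[OF x], of "D * x"] \<open>0 \<le> D\<close> \<open>0 < x\<close>
      by simp
    also have "\<dots> = x^4 * ((1 / (\<alpha> - 1) - 1) * (y' x)^2 + y x * y'' x)"
      by (simp add: power2_eq_square power3_eq_cube power4_eq_xxxx algebra_simps)
    finally show "0 \<le> (1 / (\<alpha> - 1) - 1) * (y' x)^2 + y x * y'' x"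
      using \<open>0 < x\<close> by (simp add: zero_le_mult_iff)
  qed (use \<alpha> in auto)
  then show ?thesis
    unfolding perturbed_weight_def[abs_def] y_def .
qed

lemma perturbed_weight_reciprocal:
  fixes \<alpha> \<delta> M :: real
  assumes "\<alpha> \<noteq> 1" "0 < M"
  shows "perturbed_weight \<alpha> \<delta> (\<delta> * M) (1 / M) = 1 / M"
  using assms by (simp add: perturbed_weight_def powr_powr)

lemma sum_perturbed_weight_le_one:
  fixes \<alpha> \<delta> :: real and x :: "nat \<Rightarrow> real"
  assumes \<alpha>: "0 < \<alpha>" "\<alpha> < 1" and "0 \<le> \<delta>" "0 < m"
    and x: "\<forall>i<m. 0 < x i" "(\<Sum>i<m. x i) = 1"
    and \<delta>x: "\<forall>i<m. \<delta> \<le> (1 - \<alpha>)^2 * x i powr \<alpha>"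
  shows "(\<Sum>i<m. perturbed_weight \<alpha> \<delta> (\<delta> * m) (x i)) \<le> 1"
proof -
  obtain k where k: "k < m" "min_weight m x = x k"
    using min_weight_attained[OF \<open>0 < m\<close>] .
  have "concave_on {x k..} (perturbed_weight \<alpha> \<delta> (\<delta> * m))"
    using k x(1) \<delta>x \<open>0 \<le> \<delta>\<close> by (intro concave_on_perturbed_weight[OF \<alpha>]) auto
  then have "(\<Sum>i<m. 1 / m * perturbed_weight \<alpha> \<delta> (\<delta> * m) (x i))
      \<le> perturbed_weight \<alpha> \<delta> (\<delta> * m) (\<Sum>i<m. (1 / m) *\<^sub>R x i)"
    using k min_weight_le[of _ m x] \<open>0 < m\<close> by (intro concave_on_sum) auto
  also have "(\<Sum>i<m. (1 / m) *\<^sub>R x i) = 1 / m"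
    using x(2) by (simp flip: sum_divide_distrib)
  finally show ?thesis
    using \<open>0 < m\<close> \<alpha> by (simp add: perturbed_weight_reciprocal divide_le_cancel flip: sum_divide_distrib)
qed

lemma normalizer_between:
  fixes x x' d :: "nat \<Rightarrow> real" and c e :: real
  assumes "e < 0" "0 < m"
    and pos: "\<forall>i<m. 0 < x i \<and> 0 < x' i"
    and sums: "(\<Sum>i<m. x' i) = (\<Sum>i<m. x i)"
    and step: "\<forall>i<m. x' i powr e = x i powr e + d i - c"
  shows "\<exists>j<m. d j \<le> c" and "\<exists>k<m. c \<le> d k"
proof -
  have ex_le: "\<exists>i<m. f i \<le> g i" if "(\<Sum>i<m. g i) = (\<Sum>i<m. f i)" for f g :: "nat \<Rightarrow> real"
  proof (rule ccontr)
    assume "\<not> (\<exists>i<m. f i \<le> g i)"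
    then have "(\<Sum>i<m. g i) < (\<Sum>i<m. f i)"
      using \<open>0 < m\<close> by (intro sum_strict_mono) auto
    then show False using that by simp
  qed
  obtain j where "j < m" "x j \<le> x' j"
    using ex_le[OF sums] by blast
  then have "x' j powr e \<le> x j powr e"
    using pos \<open>e < 0\<close> by (intro powr_mono2') auto
  then show "\<exists>j<m. d j \<le> c"
    using step \<open>j < m\<close> by force
  obtain k where "k < m" "x' k \<le> x k"
    using ex_le[OF sums[symmetric]] by blast
  then have "x k powr e \<le> x' k powr e"
    using pos \<open>e < 0\<close> by (intro powr_mono2') auto
  then show "\<exists>k<m. c \<le> d k"
    using step \<open>k < m\<close> by force
qed

lemma mirror_step_bounds:
  fixes x x' d :: "nat \<Rightarrow> real" and \<alpha> \<delta> c :: real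
  assumes "\<alpha> < 1" "0 < m"
    and pos: "\<forall>i<m. 0 < x i \<and> 0 < x' i"
    and sums: "(\<Sum>i<m. x' i) = (\<Sum>i<m. x i)"
    and step: "\<forall>i<m. x' i powr (\<alpha> - 1) = x i powr (\<alpha> - 1) + d i - c"
    and d_bounds: "\<forall>i<m. - \<delta> / x i \<le> d i \<and> d i \<le> \<delta>"
    and "0 \<le> \<delta>" "i < m"
  shows "x i powr (\<alpha> - 1) - (1 / x i + 1) * \<delta> \<le> x' i powr (\<alpha> - 1)"
    and "x' i powr (\<alpha> - 1) \<le> x i powr (\<alpha> - 1) + (1 / min_weight m x + 1) * \<delta>"
proof -
  obtain j k where "j < m" "d j \<le> c" "k < m" "c \<le> d k"
    using normalizer_between[OF _ \<open>0 < m\<close> pos sums step] \<open>\<alpha> < 1\<close> by auto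
  have step_i: "x' i powr (\<alpha> - 1) = x i powr (\<alpha> - 1) + d i - c"
    using step \<open>i < m\<close> by blast
  have "c \<le> \<delta>"
    using d_bounds \<open>k < m\<close> \<open>c \<le> d k\<close> by force
  have "0 < min_weight m x"
    using min_weight_pos pos \<open>0 < m\<close> by blast
  then have "\<delta> / x j \<le> \<delta> / min_weight m x"
    using min_weight_le[OF \<open>j < m\<close>, of x] \<open>0 \<le> \<delta>\<close> by (simp add: divide_left_mono)
  moreover have "- (\<delta> / x j) \<le> d j"
    using d_bounds \<open>j < m\<close> by simp
  ultimately have "- (\<delta> / min_weight m x) \<le> c"
    using \<open>d j \<le> c\<close> by linarith
  moreover have "- (\<delta> / x i) \<le> d i" "d i \<le> \<delta>"
    using d_bounds \<open>i < m\<close> by simp_all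
  ultimately have "x i powr (\<alpha> - 1) - (\<delta> / x i + \<delta>) \<le> x' i powr (\<alpha> - 1)"
    and "x' i powr (\<alpha> - 1) \<le> x i powr (\<alpha> - 1) + (\<delta> / min_weight m x + \<delta>)"
    using step_i \<open>c \<le> \<delta>\<close> by linarith+
  then show "x i powr (\<alpha> - 1) - (1 / x i + 1) * \<delta> \<le> x' i powr (\<alpha> - 1)"
    and "x' i powr (\<alpha> - 1) \<le> x i powr (\<alpha> - 1) + (1 / min_weight m x + 1) * \<delta>"
    by (simp_all add: algebra_simps)
qed

lemma mirror_step_upper_bound_uniform:
  fixes x x' d :: "nat \<Rightarrow> real" and \<alpha> \<delta> c :: real
  assumes \<alpha>: "0 < \<alpha>" "\<alpha> < 1" and "0 < m"
    and pos: "\<forall>i<m. 0 < x i \<and> 0 < x' i"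
    and sums: "(\<Sum>i<m. x i) = 1" "(\<Sum>i<m. x' i) = 1"
    and step: "\<forall>i<m. x' i powr (\<alpha> - 1) = x i powr (\<alpha> - 1) + d i - c"
    and d_bounds: "\<forall>i<m. - \<delta> / x i \<le> d i \<and> d i \<le> \<delta>"
    and "0 \<le> \<delta>" and \<delta>x: "\<forall>i<m. \<delta> \<le> (1 - \<alpha>)^2 * x i powr \<alpha>"
    and "i < m"
  shows "x' i powr (\<alpha> - 1) \<le> x i powr (\<alpha> - 1) + (m + 1) * \<delta>"
proof -
  have "- (\<delta> * m) \<le> c"
  proof (rule ccontr)
    assume "\<not> - (\<delta> * m) \<le> c"
    have "x' i < perturbed_weight \<alpha> \<delta> (\<delta> * m) (x i)" if "i < m" for i
    proof -
      have "0 < x i powr (\<alpha> - 1) - \<delta> / x i + \<delta> * m"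
        using perturbed_weight_base_pos[OF \<alpha>] pos \<delta>x \<open>0 \<le> \<delta>\<close> that by simp
      moreover have "x i powr (\<alpha> - 1) - \<delta> / x i + \<delta> * m < x' i powr (\<alpha> - 1)"
      proof -
        have "x' i powr (\<alpha> - 1) = x i powr (\<alpha> - 1) + d i - c" "- (\<delta> / x i) \<le> d i"
          using step d_bounds that by simp_all
        then show ?thesis
          using \<open>\<not> - (\<delta> * m) \<le> c\<close> by linarith
      qed
      ultimately have "(x' i powr (\<alpha> - 1)) powr (1 / (\<alpha> - 1)) < perturbed_weight \<alpha> \<delta> (\<delta> * m) (x i)"
        unfolding perturbed_weight_def using \<alpha> by (intro powr_less_mono2_neg) auto
      then show ?thesis
        using pos that \<alpha> by (simp add: powr_powr)
    qed
    then have "(\<Sum>i<m. x' i) < (\<Sum>i<m. perturbed_weight \<alpha> \<delta> (\<delta> * m) (x i))"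
      using \<open>0 < m\<close> by (intro sum_strict_mono) auto
    also have "\<dots> \<le> 1"
      using sum_perturbed_weight_le_one[OF \<alpha> \<open>0 \<le> \<delta>\<close> \<open>0 < m\<close>] pos sums(1) \<delta>x by simp
    finally show False
      using sums(2) by simp
  qed
  moreover have "x' i powr (\<alpha> - 1) = x i powr (\<alpha> - 1) + d i - c" "d i \<le> \<delta>"
    using step d_bounds \<open>i < m\<close> by simp_all
  ultimately have "x' i powr (\<alpha> - 1) \<le> x i powr (\<alpha> - 1) + (\<delta> * m + \<delta>)"
    by linarith
  then show ?thesis
    by (simp add: algebra_simps)
qed

lemma alg1_run_simplex:
  assumes run: "alg1_run m n T \<alpha> p jt w \<eta>" and "1 \<le> m" "1 \<le> t" "t \<le> T + 1"
  shows "in_simplex m (w t) \<and> (\<forall>i<m. 0 < w t i)"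
proof (cases "t = 1")
  case True
  then show ?thesis
    using run \<open>1 \<le> m\<close> by (simp add: alg1_run_def in_simplex_def)
next
  case False
  then have "t - 1 \<in> {1..T}" "t - 1 + 1 = t"
    using assms(3,4) by auto
  moreover have "in_simplex m (w (t - 1 + 1)) \<and> (\<forall>i<m. 0 < w (t - 1 + 1) i)"
    using run \<open>t - 1 \<in> {1..T}\<close> unfolding alg1_run_def by blast
  ultimately show ?thesis
    by simp
qed

lemma alg1_eta_nonneg: "0 \<le> alg1_eta m n T \<alpha>"
  unfolding alg1_eta_def by (cases "T = 0") auto

lemma alg1_run_rate_nonneg:
  assumes run: "alg1_run m n T \<alpha> p jt w \<eta>" and "1 \<le> m" "t \<in> {1..T}"
  shows "0 \<le> \<eta> t"
  using assms(3)
proof (induction t)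
  case 0
  then show ?case by simp
next
  case (Suc t)
  define cand where "cand = (if alg1_eta m n T \<alpha> \<le> min_weight m (\<lambda>i. w (Suc t) i powr \<alpha>)
                             then alg1_eta m n T \<alpha> else min_weight m (w (Suc t)))"
  have "\<eta> (Suc t) = (if Suc t = 1 then cand else min (\<eta> t) cand)"
    using run Suc.prems unfolding alg1_run_def cand_def Let_def by auto
  moreover have "0 < min_weight m (w (Suc t))"
    using alg1_run_simplex[OF run \<open>1 \<le> m\<close>, of "Suc t"] Suc.prems \<open>1 \<le> m\<close>
    by (intro min_weight_pos) auto
  then have "0 \<le> cand"
    unfolding cand_def using alg1_eta_nonneg by simp
  moreover have "t \<noteq> 0 \<Longrightarrow> 0 \<le> \<eta> t"
    using Suc by simp
  ultimately show ?case
    by auto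
qed

lemma alg1_run_update:
  assumes run: "alg1_run m n T \<alpha> p jt w \<eta>" and "t \<in> {1..T}"
  obtains c where "\<forall>i<m. w (t + 1) i powr (\<alpha> - 1)
      = w t i powr (\<alpha> - 1) + \<eta> t * partial_loss m n (p t) (jt t) (w t) i - c"
proof -
  obtain c where c: "\<forall>i<m. - (w (t + 1) i powr (\<alpha> - 1))
      = - (w t i powr (\<alpha> - 1)) - \<eta> t * partial_loss m n (p t) (jt t) (w t) i + c"
    using run \<open>t \<in> {1..T}\<close> unfolding alg1_run_def by blast
  show ?thesis
  proof (rule that, intro allI impI)
    fix i assume "i < m"
    from c[rule_format, OF this] show "w (t + 1) i powr (\<alpha> - 1)
        = w t i powr (\<alpha> - 1) + \<eta> t * partial_loss m n (p t) (jt t) (w t) i - c"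
      by linarith
  qed
qed

lemma alg1_run_mirror_step:
  assumes run: "alg1_run m n T \<alpha> p jt w \<eta>" and "1 \<le> m" "t \<in> {1..T}"
    and grad: "\<forall>i<m. - \<zeta> / w t i \<le> partial_loss m n (p t) (jt t) (w t) i
                     \<and> partial_loss m n (p t) (jt t) (w t) i \<le> \<zeta>"
  obtains c d where "\<forall>i<m. 0 < w t i \<and> 0 < w (t + 1) i"
    "(\<Sum>i<m. w t i) = 1" "(\<Sum>i<m. w (t + 1) i) = 1"
    "\<forall>i<m. w (t + 1) i powr (\<alpha> - 1) = w t i powr (\<alpha> - 1) + d i - c"
    "\<forall>i<m. - (\<eta> t * \<zeta>) / w t i \<le> d i \<and> d i \<le> \<eta> t * \<zeta>"
    "0 \<le> \<eta> t * \<zeta>"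
proof -
  define g where "g = partial_loss m n (p t) (jt t) (w t)"
  have "in_simplex m (w t) \<and> (\<forall>i<m. 0 < w t i)" "in_simplex m (w (t + 1)) \<and> (\<forall>i<m. 0 < w (t + 1) i)"
    using alg1_run_simplex[OF run \<open>1 \<le> m\<close>] \<open>t \<in> {1..T}\<close> by auto
  then have pos: "\<forall>i<m. 0 < w t i \<and> 0 < w (t + 1) i"
    and sums: "(\<Sum>i<m. w t i) = 1" "(\<Sum>i<m. w (t + 1) i) = 1"
    unfolding in_simplex_def by auto
  obtain c where step: "\<forall>i<m. w (t + 1) i powr (\<alpha> - 1) = w t i powr (\<alpha> - 1) + \<eta> t * g i - c"
    using alg1_run_update[OF run \<open>t \<in> {1..T}\<close>] unfolding g_def by blast
  have "0 \<le> \<eta> t"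
    using alg1_run_rate_nonneg[OF run \<open>1 \<le> m\<close> \<open>t \<in> {1..T}\<close>] .
  have "- \<zeta> / w t 0 \<le> \<zeta>" "0 < w t 0"
    using grad pos \<open>1 \<le> m\<close> by auto
  then have "0 \<le> \<zeta>"
    by (smt (verit) divide_pos_pos)
  have d_bounds: "\<forall>i<m. - (\<eta> t * \<zeta>) / w t i \<le> \<eta> t * g i \<and> \<eta> t * g i \<le> \<eta> t * \<zeta>"
  proof (intro allI impI conjI)
    fix i assume "i < m"
    then have "- \<zeta> / w t i \<le> g i" "g i \<le> \<zeta>"
      using grad unfolding g_def by auto
    then show "- (\<eta> t * \<zeta>) / w t i \<le> \<eta> t * g i" "\<eta> t * g i \<le> \<eta> t * \<zeta>"
      using mult_left_mono[OF _ \<open>0 \<le> \<eta> t\<close>] by fastforce+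
  qed
  have "0 \<le> \<eta> t * \<zeta>"
    using \<open>0 \<le> \<eta> t\<close> \<open>0 \<le> \<zeta>\<close> by simp
  with d_bounds show ?thesis
    by (rule that[OF pos sums step])
qed

theorem lemma2:
  fixes m n T :: nat and \<alpha> \<zeta> :: real
    and p :: "nat \<Rightarrow> nat \<Rightarrow> nat \<Rightarrow> real" and jt :: "nat \<Rightarrow> nat"
    and w :: "nat \<Rightarrow> nat \<Rightarrow> real" and \<eta> :: "nat \<Rightarrow> real"
  assumes "m \<ge> 1" and "n \<ge> 1"
    and "0 < \<alpha>" and "\<alpha> < 1/2"
    and reports: "\<And>t k. t \<in> {1..T} \<Longrightarrow> k < m \<Longrightarrow> in_simplex n (p t k) \<and> (\<forall>l<n. 0 < p t k l)"
    and outcomes: "\<And>t. t \<in> {1..T} \<Longrightarrow> jt t < n"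
    and run: "alg1_run m n T \<alpha> p jt w \<eta>"
    and zeta: "\<And>t i. t \<in> {1..T} \<Longrightarrow> i < m \<Longrightarrow>
        - \<zeta> / w t i \<le> partial_loss m n (p t) (jt t) (w t) i \<and>
        partial_loss m n (p t) (jt t) (w t) i \<le> \<zeta>"
  shows "\<forall>t\<in>{1..T}.
           (\<forall>i<m.
              w t i powr (\<alpha> - 1) - (1 / w t i + 1) * \<eta> t * \<zeta> \<le> w (t + 1) i powr (\<alpha> - 1) \<and>
              w (t + 1) i powr (\<alpha> - 1) \<le> w t i powr (\<alpha> - 1) + (1 / min_weight m (w t) + 1) * \<eta> t * \<zeta>) \<and>
           ((\<forall>i<m. \<eta> t * \<zeta> \<le> (1 - \<alpha>)^2 * w t i powr \<alpha>) \<longrightarrow>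
              (\<forall>i<m. w (t + 1) i powr (\<alpha> - 1) \<le> w t i powr (\<alpha> - 1) + (real m + 1) * \<eta> t * \<zeta>))"
proof
  fix t assume t: "t \<in> {1..T}"
  have grad: "\<forall>i<m. - \<zeta> / w t i \<le> partial_loss m n (p t) (jt t) (w t) i
                   \<and> partial_loss m n (p t) (jt t) (w t) i \<le> \<zeta>"
    using zeta[OF t] by blast
  obtain c d where pos: "\<forall>i<m. 0 < w t i \<and> 0 < w (t + 1) i"
    and sums: "(\<Sum>i<m. w t i) = 1" "(\<Sum>i<m. w (t + 1) i) = 1"
    and step: "\<forall>i<m. w (t + 1) i powr (\<alpha> - 1) = w t i powr (\<alpha> - 1) + d i - c"
    and d_bounds: "\<forall>i<m. - (\<eta> t * \<zeta>) / w t i \<le> d i \<and> d i \<le> \<eta> t * \<zeta>"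
    and "0 \<le> \<eta> t * \<zeta>"
    by (rule alg1_run_mirror_step[OF run \<open>m \<ge> 1\<close> t grad])
  have "0 < m"
    using \<open>m \<ge> 1\<close> by simp
  note bounds = mirror_step_bounds[OF _ \<open>0 < m\<close> pos _ step d_bounds \<open>0 \<le> \<eta> t * \<zeta>\<close>]
    and uniform = mirror_step_upper_bound_uniform[OF _ _ \<open>0 < m\<close> pos sums step d_bounds \<open>0 \<le> \<eta> t * \<zeta>\<close>]
  show "(\<forall>i<m.
              w t i powr (\<alpha> - 1) - (1 / w t i + 1) * \<eta> t * \<zeta> \<le> w (t + 1) i powr (\<alpha> - 1) \<and>
              w (t + 1) i powr (\<alpha> - 1) \<le> w t i powr (\<alpha> - 1) + (1 / min_weight m (w t) + 1) * \<eta> t * \<zeta>) \<and>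
           ((\<forall>i<m. \<eta> t * \<zeta> \<le> (1 - \<alpha>)^2 * w t i powr \<alpha>) \<longrightarrow>
              (\<forall>i<m. w (t + 1) i powr (\<alpha> - 1) \<le> w t i powr (\<alpha> - 1) + (real m + 1) * \<eta> t * \<zeta>))"
    using bounds uniform \<open>0 < \<alpha>\<close> \<open>\<alpha> < 1/2\<close> sums by (simp add: mult.assoc)
qed

end
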